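(* There exists a binary sequence $S$ such that $R_{\mathrm{PPM}^*}(S)=0$ but for every $k\in\mathbb{N}$, $\rho_{\mathrm{PPM}_k}(S)\ge \tfrac12$. Here $R_T(S)=\limsup_{m\to\infty}|T(S\upharpoonright m)|/m$ and $\rho_T(S)=\liminf_{m\to\infty}|T(S\upharpoonright m)|/m$.
   Context: $S\upharpoonright m$ is the length-$m$ prefix of $S$; $\log$ is base $2$. Common model mechanics (without exclusion, escape Method C) on binary input: after reading a prefix $x$, each stored context $c$ has, for each bit $b$, a frequency count equal to the number of occurrences of $cb$ as a substring of $x$, and an escape count equal to the number of distinct bits that have followed $c$ in $x$; a context is deterministic if its escape count is $1$. Relevant contexts are the stored contexts that are suffixes of $x$. To encode the next bit $b$ starting from a chosen current context: if $b$ has count $f>0$ there, it is encoded with probability $f/(T+e)$ ($T$ the total bit count, $e$ the escape count); otherwise an escape is encoded with probability $e/(T+e)$ and the next shorter relevant context becomes current; if $b$ is unseen even in the empty context, after the escape $b$ is encoded with probability $1/2$. The model is then updated. The output is an arithmetic code of length $\lceil -\log P\rceil+O(1)$, $P$ the product of all probabilities used. $\mathrm{PPM}^*$: the stored contexts are the empty context and, whenever a string $w$ occurs at least twice in $x$, the contexts $wb$ for each bit $b$ such that $wb$ occurs in $x$ followed by a further bit; the initial current context is the shortest deterministic relevant context, or the longest relevant context if none is deterministic. $\mathrm{PPM}_k$ (bounded PPM with maximal context length $k$): the stored contexts are all strings of length at most $k$ that have occurred in $x$ followed by a bit (plus the empty context); the initial current context is the longest relevant context. *)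

theory Defs
  imports Complex_Main "HOL-Library.Extended_Real" "HOL-Library.Liminf_Limsup"
begin

definition prefix_of :: "(nat \<Rightarrow> bool) \<Rightarrow> nat \<Rightarrow> bool list" where
  "prefix_of S m = map S [0..<m]"

definition occ :: "bool list \<Rightarrow> bool list \<Rightarrow> nat" where
  "occ w x = card {i. i + length w \<le> length x \<and> take (length w) (drop i x) = w}"

definition cnt :: "bool list \<Rightarrow> bool list \<Rightarrow> bool \<Rightarrow> nat" where
  "cnt x c b = occ (c @ [b]) x"

definition tot :: "bool list \<Rightarrow> bool list \<Rightarrow> nat" where
  "tot x c = cnt x c False + cnt x c True"

definition esc :: "bool list \<Rightarrow> bool list \<Rightarrow> nat" where
  "esc x c = card {b. cnt x c b > 0}"

definition sfx :: "bool list \<Rightarrow> nat \<Rightarrow> bool list" where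
  "sfx x l = drop (length x - l) x"

text \<open>Probability of encoding bit b after x, walking the given chain of contexts
  (from the current context down to the empty context), PPM escape method C,
  without exclusion.  Convention: an escape from a context with T + e = 0
  (only the empty context before any input) has probability 1.\<close>
fun enc :: "bool list \<Rightarrow> bool \<Rightarrow> bool list list \<Rightarrow> real" where
  "enc x b [] = 1 / 2"
| "enc x b (c # cs) =
     (if cnt x c b > 0 then real (cnt x c b) / real (tot x c + esc x c)
      else (if tot x c + esc x c = 0 then 1 else real (esc x c) / real (tot x c + esc x c))
           * enc x b cs)"

definition chain :: "(bool list \<Rightarrow> bool list \<Rightarrow> bool) \<Rightarrow> bool list \<Rightarrow> nat \<Rightarrow> bool list list" where
  "chain stored x l = filter (stored x) (map (sfx x) (rev [0..<Suc l]))"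

definition prob_model :: "(bool list \<Rightarrow> bool list \<Rightarrow> bool) \<Rightarrow> (bool list \<Rightarrow> nat) \<Rightarrow> bool list \<Rightarrow> real" where
  "prob_model stored init y =
     (\<Prod>i<length y. enc (take i y) (y ! i) (chain stored (take i y) (init (take i y))))"

text \<open>Output length of the arithmetic coder (the additive O(1) term is irrelevant
  for the asymptotic ratios and is taken to be 0).\<close>
definition code_len :: "(bool list \<Rightarrow> bool list \<Rightarrow> bool) \<Rightarrow> (bool list \<Rightarrow> nat) \<Rightarrow> bool list \<Rightarrow> real" where
  "code_len stored init y = real_of_int \<lceil>- log 2 (prob_model stored init y)\<rceil>"

definition stored_star :: "bool list \<Rightarrow> bool list \<Rightarrow> bool" where
  "stored_star x c \<longleftrightarrow> c = [] \<or>
     (\<exists>w b. c = w @ [b] \<and> occ w x \<ge> 2 \<and> tot x c > 0)"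

definition init_star :: "bool list \<Rightarrow> nat" where
  "init_star x =
     (if \<exists>l \<le> length x. stored_star x (sfx x l) \<and> esc x (sfx x l) = 1
      then (LEAST l. l \<le> length x \<and> stored_star x (sfx x l) \<and> esc x (sfx x l) = 1)
      else (GREATEST l. l \<le> length x \<and> stored_star x (sfx x l)))"

definition ppm_star_len :: "bool list \<Rightarrow> real" where
  "ppm_star_len y = code_len stored_star init_star y"

definition stored_k :: "nat \<Rightarrow> bool list \<Rightarrow> bool list \<Rightarrow> bool" where
  "stored_k k x c \<longleftrightarrow> c = [] \<or> (length c \<le> k \<and> tot x c > 0)"

definition init_k :: "nat \<Rightarrow> bool list \<Rightarrow> nat" where
  "init_k k x = (GREATEST l. l \<le> length x \<and> stored_k k x (sfx x l))"

definition ppm_k_len :: "nat \<Rightarrow> bool list \<Rightarrow> real" where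
  "ppm_k_len k y = code_len (stored_k k) (init_k k) y"

definition upper_ratio :: "(bool list \<Rightarrow> real) \<Rightarrow> (nat \<Rightarrow> bool) \<Rightarrow> ereal" where
  "upper_ratio T S = limsup (\<lambda>m. ereal (T (prefix_of S m) / real m))"

definition lower_ratio :: "(bool list \<Rightarrow> real) \<Rightarrow> (nat \<Rightarrow> bool) \<Rightarrow> ereal" where
  "lower_ratio T S = liminf (\<lambda>m. ereal (T (prefix_of S m) / real m))"

end

theory Submission
  imports Defs
begin

text \<open>
  The witness is the concatenation of blocks; block n repeats 64 ^ (n + 1) times the segment
  0 ^ (n + 1) 1 u1 1 u2 1 ... uN 1, where u1, ..., uN are all binary words of length n.

  Within segment n all words of length k + 1 occur about equally often. Once the blocks are long
  enough compared with k, the order-k context has therefore been followed by both bits, neither more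
  than twice as often as the other, so PPM-k encodes every bit with probability at most 2/3 and
  spends at least log (3/2) > 1/2 bit per symbol.

  PPM* instead finds, in the a-th repetition of a segment, the deterministic context formed by the
  previous segment and the current partial one: its leading run of n + 1 zeros occurs only at segment
  boundaries, and it has been followed by the correct bit a - 1 times. The bit then costs at most
  log (a / (a - 1)); over a block these costs telescope to about seg_len n * log (64 ^ (n + 1)), which
  is negligible compared with the block length.
\<close>

section \<open>Words and their occurrences\<close>

lemma sum_lessThan_add: "(\<Sum>i<m + k. f i) = (\<Sum>i<m. f i) + (\<Sum>i<k. f (m + i))"
  for f :: "nat \<Rightarrow> 'a::comm_monoid_add"
  by (induction k) (simp_all add: add.assoc)

definition occ_positions :: "bool list \<Rightarrow> bool list \<Rightarrow> nat set" where
  "occ_positions w x = {i. i + length w \<le> length x \<and> take (length w) (drop i x) = w}"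

lemma occ_eq_card_occ_positions: "occ w x = card (occ_positions w x)"
  by (simp add: occ_def occ_positions_def)

lemma finite_occ_positions [simp]: "finite (occ_positions w x)"
  by (rule finite_subset[of _ "{..length x}"]) (auto simp: occ_positions_def)

lemma mem_occ_positions_iff_nth:
  "i \<in> occ_positions w x \<longleftrightarrow> i + length w \<le> length x \<and> (\<forall>l<length w. x ! (i + l) = w ! l)"
  by (auto simp: occ_positions_def list_eq_iff_nth_eq)

lemma occ_append_ge:
  assumes "w \<noteq> []"
  shows "occ w x + occ w y \<le> occ w (x @ y)"
proof -
  let ?A = "occ_positions w x" and ?B = "(\<lambda>i. i + length x) ` occ_positions w y"
  have "?A \<inter> ?B = {}"
    using assms by (auto simp: occ_positions_def)
  have sub: "?A \<union> ?B \<subseteq> occ_positions w (x @ y)"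
    by (auto simp: mem_occ_positions_iff_nth nth_append add.commute add.left_commute)
  have "card ?B = occ w y"
    by (simp add: occ_eq_card_occ_positions card_image inj_on_def)
  with \<open>?A \<inter> ?B = {}\<close> have "occ w x + occ w y = card (?A \<union> ?B)"
    by (simp add: occ_eq_card_occ_positions card_Un_disjoint)
  also have "\<dots> \<le> occ w (x @ y)"
    unfolding occ_eq_card_occ_positions using sub by (intro card_mono) simp_all
  finally show ?thesis .
qed

lemma occ_positions_mono_append: "occ_positions w x \<subseteq> occ_positions w (x @ y)"
  by (auto simp: mem_occ_positions_iff_nth nth_append)

lemma occ_le_occ_append: "occ w x \<le> occ w (x @ y)"
  unfolding occ_eq_card_occ_positions by (intro card_mono occ_positions_mono_append) simp

lemma occ_le_occ_append_left:
  assumes "w \<noteq> []"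
  shows "occ w y \<le> occ w (x @ y)"
  using occ_append_ge[OF assms, of x y] by simp

lemma sum_list_occ_le_occ_concat:
  assumes "w \<noteq> []"
  shows "sum_list (map (occ w) xs) \<le> occ w (concat xs)"
proof (induction xs)
  case (Cons a xs)
  then show ?case using occ_append_ge[OF assms, of a "concat xs"] by simp
qed simp

lemma occ_concat_replicate_ge:
  assumes "w \<noteq> []"
  shows "a * occ w x \<le> occ w (concat (replicate a x))"
  using sum_list_occ_le_occ_concat[OF assms, of "replicate a x"] by (simp add: sum_list_replicate)

lemma occ_le_occ_drop:
  assumes "d \<le> length w"
  shows "occ w x \<le> occ (drop d w) x"
proof -
  have "(\<lambda>i. i + d) ` occ_positions w x \<subseteq> occ_positions (drop d w) x"
    using assms by (auto simp: mem_occ_positions_iff_nth add.assoc)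
  then have "card ((\<lambda>i. i + d) ` occ_positions w x) \<le> occ (drop d w) x"
    unfolding occ_eq_card_occ_positions by (rule card_mono[rotated]) simp
  then show ?thesis
    by (simp add: occ_eq_card_occ_positions card_image inj_on_def)
qed

lemma occ_positions_subset_take: "occ_positions w x \<subseteq> occ_positions (take l w) x"
  by (auto simp: mem_occ_positions_iff_nth min_def)

lemma occ_le_occ_take: "occ w x \<le> occ (take l w) x"
  unfolding occ_eq_card_occ_positions by (intro card_mono occ_positions_subset_take) simp

text \<open>Occurrences of distinct words of the same positive length start at distinct positions.\<close>

lemma sum_occ_le_length:
  assumes "finite W" "\<And>w. w \<in> W \<Longrightarrow> length w = l" "0 < l"
  shows "(\<Sum>w\<in>W. occ w x) \<le> length x"
proof -
  have "(\<Sum>w\<in>W. occ w x) = card (\<Union>w\<in>W. occ_positions w x)"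
    unfolding occ_eq_card_occ_positions
    by (rule card_UN_disjoint[symmetric], simp_all add: assms)
      (use assms in \<open>auto simp: occ_positions_def\<close>)
  also have "\<dots> \<le> card {..<length x}"
    by (rule card_mono) (use assms in \<open>auto simp: occ_positions_def\<close>)
  finally show ?thesis by simp
qed

lemma card_lists_with_factor_at:
  assumes "q + length w \<le> n"
  shows "card {u :: bool list. length u = n \<and> take (length w) (drop q u) = w} = 2 ^ (n - length w)"
proof -
  let ?A = "{a :: bool list. length a = q}" and ?C = "{c :: bool list. length c = n - q - length w}"
  have card_lists: "card {a :: bool list. length a = m} = 2 ^ m" for m
    using card_lists_length_eq[of "UNIV :: bool set" m] by simp
  have "{u :: bool list. length u = n \<and> take (length w) (drop q u) = w}
      = (\<lambda>(a, c). a @ w @ c) ` (?A \<times> ?C)"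
  proof (intro set_eqI iffI)
    fix u assume u: "u \<in> {u :: bool list. length u = n \<and> take (length w) (drop q u) = w}"
    then have "u = take q u @ w @ drop (q + length w) u"
      by (metis (mono_tags) append_take_drop_id drop_drop mem_Collect_eq add.commute)
    moreover have "(take q u, drop (q + length w) u) \<in> ?A \<times> ?C"
      using u assms by auto
    ultimately show "u \<in> (\<lambda>(a, c). a @ w @ c) ` (?A \<times> ?C)"
      by (metis (no_types, lifting) case_prod_conv image_eqI)
  qed (use assms in auto)
  moreover have "inj_on (\<lambda>(a, c). a @ w @ c) (?A \<times> ?C)"
    by (auto simp: inj_on_def)
  ultimately have "card {u :: bool list. length u = n \<and> take (length w) (drop q u) = w}
      = 2 ^ q * 2 ^ (n - q - length w)"
    by (simp add: card_image card_cartesian_product card_lists)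
  also have "\<dots> = 2 ^ (n - length w)"
    using assms by (simp add: power_add[symmetric])
  finally show ?thesis .
qed

lemma sum_occ_lists_length_eq:
  assumes "length w \<le> n"
  shows "(\<Sum>u | length u = n. occ w u) = (n + 1 - length w) * 2 ^ (n - length w)"
proof -
  let ?l = "length w" and ?U = "{u :: bool list. length u = n}"
  let ?at = "\<lambda>q u. if take ?l (drop q u) = w then 1 else 0 :: nat"
  have "finite ?U"
    using finite_lists_length_eq[of "UNIV :: bool set" n] by simp
  have "(\<Sum>u\<in>?U. occ w u) = (\<Sum>u\<in>?U. \<Sum>q\<le>n - ?l. ?at q u)"
  proof (rule sum.cong[OF refl])
    fix u assume "u \<in> ?U"
    then have "occ w u = card {q \<in> {..n - ?l}. take ?l (drop q u) = w}"
      unfolding occ_def using assms by (intro arg_cong[where f=card]) auto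
    then show "occ w u = (\<Sum>q\<le>n - ?l. ?at q u)"
      by (simp add: sum.If_cases, intro arg_cong[where f=card], auto)
  qed
  also have "\<dots> = (\<Sum>q\<le>n - ?l. \<Sum>u\<in>?U. ?at q u)"
    by (rule sum.swap)
  also have "\<dots> = (\<Sum>q\<le>n - ?l. 2 ^ (n - ?l))"
  proof (rule sum.cong[OF refl])
    fix q assume "q \<in> {..n - ?l}"
    then have "q + ?l \<le> n" using assms by auto
    have "(\<Sum>u\<in>?U. ?at q u) = card {u \<in> ?U. take ?l (drop q u) = w}"
      using \<open>finite ?U\<close> by (simp add: sum.If_cases Collect_conj_eq)
    then show "(\<Sum>u\<in>?U. ?at q u) = 2 ^ (n - ?l)"
      using card_lists_with_factor_at[OF \<open>q + ?l \<le> n\<close>] by simp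
  qed
  also have "\<dots> = (n + 1 - ?l) * 2 ^ (n - ?l)"
    using assms by (simp add: Suc_diff_le)
  finally show ?thesis .
qed

lemma occ_positions_append_right:
  "q \<in> occ_positions w (xs @ ys) \<Longrightarrow> length xs \<le> q \<Longrightarrow> q - length xs \<in> occ_positions w ys"
  by (auto simp: mem_occ_positions_iff_nth nth_append)

lemma occ_positions_append_left:
  "q \<in> occ_positions w (xs @ ys) \<Longrightarrow> q + length w \<le> length xs \<Longrightarrow> q \<in> occ_positions w xs"
  by (auto simp: mem_occ_positions_iff_nth nth_append)

lemma take_concat_replicate:
  "a < r \<Longrightarrow> p \<le> length xs \<Longrightarrow>
   take (a * length xs + p) (concat (replicate r xs)) = concat (replicate a xs) @ take p xs"
proof (induction a arbitrary: r)
  case 0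
  then show ?case
    by (cases r) auto
next
  case (Suc a)
  then obtain r' where "r = Suc r'"
    by (cases r) auto
  with Suc show ?case
    by (simp add: add.assoc)
qed

lemma drop_concat_replicate_append:
  "j \<le> a \<Longrightarrow> drop (j * length xs) (concat (replicate a xs) @ ys) = concat (replicate (a - j) xs) @ ys"
proof (induction j arbitrary: a)
  case (Suc j)
  then obtain a' where "a = Suc a'"
    by (cases a) auto
  with Suc show ?case
    by simp
qed simp

lemma nth_concat_replicate_append:
  assumes "m < a" "p < length xs"
  shows "(concat (replicate a xs) @ ys) ! (m * length xs + p) = xs ! p"
proof -
  let ?zs = "concat (replicate a xs) @ ys"
  have "m * length xs \<le> length ?zs"
    using assms(1) by (simp add: length_concat sum_list_replicate trans_le_add1)
  then have "?zs ! (m * length xs + p) = drop (m * length xs) ?zs ! p"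
    by (rule nth_drop[symmetric])
  also have "\<dots> = (concat (replicate (Suc (a - Suc m)) xs) @ ys) ! p"
    using assms(1) drop_concat_replicate_append[of m a xs ys] by (simp add: Suc_diff_Suc)
  also have "\<dots> = xs ! p"
    using assms(2) by (simp add: nth_append)
  finally show ?thesis .
qed

section \<open>Runs of zeros\<close>

abbreviation zero_runs :: "nat \<Rightarrow> bool list \<Rightarrow> nat set" where
  "zero_runs L zs \<equiv> occ_positions (replicate L False) zs"

lemma mem_zero_runs_iff: "q \<in> zero_runs L zs \<longleftrightarrow> q + L \<le> length zs \<and> (\<forall>l<L. zs ! (q + l) = False)"
  by (simp add: mem_occ_positions_iff_nth)

lemma zero_runs_mono: "L \<le> L' \<Longrightarrow> zero_runs L' zs \<subseteq> zero_runs L zs"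
  by (auto simp: mem_occ_positions_iff_nth)

lemma zero_runs_append_ge:
  assumes "zero_runs L xs = {}" "xs \<noteq> [] \<Longrightarrow> last xs" "q \<in> zero_runs L (xs @ ys)"
  shows "length xs \<le> q"
proof (rule ccontr)
  assume q: "\<not> length xs \<le> q"
  show False
  proof (cases "q + L \<le> length xs")
    case True
    then show False
      using occ_positions_append_left[OF assms(3)] assms(1) by simp
  next
    case False
    have "\<forall>l<L. (xs @ ys) ! (q + l) = False"
      using assms(3) by (simp add: mem_occ_positions_iff_nth)
    moreover have "length xs - 1 - q < L"
      using False q by linarith
    ultimately have "(xs @ ys) ! (q + (length xs - 1 - q)) = False"
      by blast
    moreover have "q + (length xs - 1 - q) = length xs - 1"
      using q by linarith
    moreover have "xs \<noteq> []"
      using q by auto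
    ultimately show False
      using assms(2) by (simp add: nth_append last_conv_nth)
  qed
qed

lemma zero_runs_snoc_True:
  assumes "length v < L"
  shows "zero_runs L (v @ [True]) = {}"
proof -
  have False if "q \<in> zero_runs L (v @ [True])" for q
  proof -
    have "q + L \<le> length v + 1" and zeros: "\<forall>l<L. (v @ [True]) ! (q + l) = False"
      using that by (simp_all add: mem_occ_positions_iff_nth)
    then have "q = 0"
      using assms by simp
    then show False
      using zeros assms by (auto simp: nth_append)
  qed
  then show ?thesis
    by blast
qed

lemma zero_runs_append:
  assumes "zero_runs L xs = {}" "zero_runs L ys = {}" "xs \<noteq> [] \<Longrightarrow> last xs"
  shows "zero_runs L (xs @ ys) = {}"
  using zero_runs_append_ge[OF assms(1,3)] occ_positions_append_right assms(2) by blast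

lemma zero_runs_concat:
  assumes "\<And>u. u \<in> set us \<Longrightarrow> zero_runs L u = {} \<and> (u \<noteq> [] \<longrightarrow> last u)" "0 < L"
  shows "zero_runs L (concat us) = {}"
  using assms
proof (induction us)
  case Nil
  then show ?case
    by (simp add: occ_positions_def)
next
  case (Cons u us)
  then show ?case
    by (simp add: zero_runs_append)
qed

section \<open>Coding probabilities\<close>

lemma card_Collect_bool: "card {b :: bool. P b} = (if P False then 1 else 0) + (if P True then 1 else 0)"
proof -
  have "b \<in> {b. P b} \<longleftrightarrow> b \<in> (if P False then {False} else {}) \<union> (if P True then {True} else {})" for b
    by (cases b) simp_all
  then have "{b. P b} = (if P False then {False} else {}) \<union> (if P True then {True} else {})"
    by blast
  then show ?thesis by simp
qed

lemma esc_eq: "esc x c = (if 0 < cnt x c False then 1 else 0) + (if 0 < cnt x c True then 1 else 0)"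
  unfolding esc_def by (rule card_Collect_bool)

lemma esc_eq_1_iff:
  assumes "0 < cnt x c b"
  shows "esc x c = 1 \<longleftrightarrow> cnt x c (\<not> b) = 0"
  using assms by (cases b) (simp_all add: esc_eq)

lemma tot_eq: "tot x c = cnt x c b + cnt x c (\<not> b)"
  by (cases b) (simp_all add: tot_def)

lemma cnt_le_tot: "cnt x c b \<le> tot x c"
  by (simp add: tot_eq[of x c b])

lemma tot_le_length: "tot x c \<le> length x"
proof -
  have "(\<Sum>w\<in>{c @ [False], c @ [True]}. occ w x) \<le> length x"
    by (rule sum_occ_le_length[of _ "length c + 1"]) auto
  then show ?thesis
    by (simp add: tot_def cnt_def)
qed

lemma enc_pos: "0 < enc x b cs"
proof (induction cs)
  case (Cons c cs)
  then show ?case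
    using cnt_le_tot[of x c b] by (auto simp: esc_eq tot_def not_less)
qed simp

lemma enc_le_1: "enc x b cs \<le> 1"
proof (induction cs)
  case (Cons c cs)
  have "real (cnt x c b) \<le> real (tot x c + esc x c)"
    using cnt_le_tot[of x c b] by simp
  moreover have "real (esc x c) * enc x b cs \<le> real (tot x c + esc x c)"
    using Cons.IH mult_left_mono[OF Cons.IH, of "real (esc x c)"] by simp
  ultimately show ?case
    using Cons.IH by (auto simp: divide_le_eq_1 pos_divide_le_eq)
qed simp

text \<open>In a chain without deterministic contexts, every context escaped from has escape count 0,
  so it has never been seen and the escape costs nothing.\<close>

lemma enc_ge_if_nondeterministic:
  assumes "\<And>c. c \<in> set cs \<Longrightarrow> esc x c \<noteq> 1"
  shows "1 / (real (length x) + 2) \<le> enc x b cs"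
  using assms
proof (induction cs)
  case (Cons c cs)
  show ?case
  proof (cases "0 < cnt x c b")
    case True
    have "tot x c + esc x c \<le> length x + 2"
      using tot_le_length[of x c] by (simp add: esc_eq)
    then have "1 / (real (length x) + 2) \<le> 1 / real (tot x c + esc x c)"
      using True cnt_le_tot[of x c b] by (intro divide_left_mono) auto
    also have "\<dots> \<le> real (cnt x c b) / real (tot x c + esc x c)"
      using True by (intro divide_right_mono) auto
    finally show ?thesis
      using True by simp
  next
    case False
    have "esc x c \<noteq> 1"
      using Cons.prems by simp
    then have "cnt x c (\<not> b) = 0"
      using False by (cases b) (simp_all add: esc_eq split: if_splits)
    then have "tot x c = 0" and "esc x c = 0"
      using False by (simp_all add: tot_eq[of x c b]) (cases b; simp add: esc_eq)
    then show ?thesis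
      using False Cons by simp
  qed
qed (simp add: divide_le_eq)

lemma enc_Cons_deterministic_ge:
  assumes "esc x c = 1" and "1 / (real (length x) + 2) \<le> enc x b cs"
  shows "1 / (real (length x) + 2) ^ 2 \<le> enc x b (c # cs)"
proof -
  let ?L = "real (length x)"
  have "1 / (?L + 2) ^ 2 \<le> 1 / (?L + 1) * (1 / (?L + 2))"
    by (simp add: power2_eq_square frac_le mult_mono)
  also have "\<dots> \<le> 1 / real (tot x c + 1) * min 1 (enc x b cs)"
    using tot_le_length[of x c] assms(2) by (intro mult_mono divide_left_mono) auto
  also have "\<dots> \<le> enc x b (c # cs)"
    using assms(1) by (auto simp: min_def divide_right_mono)
  finally show ?thesis .
qed

lemma chain_eq_Cons:
  assumes "stored x (sfx x l)"
  shows "\<exists>cs. chain stored x l = sfx x l # cs \<and> (\<forall>c\<in>set cs. stored x c \<and> (\<exists>l'<l. c = sfx x l'))"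
proof -
  have "chain stored x l = sfx x l # filter (stored x) (map (sfx x) (rev [0..<l]))"
    using assms by (simp add: chain_def)
  then show ?thesis by fastforce
qed

lemma length_prefix_of [simp]: "length (prefix_of S m) = m"
  by (simp add: prefix_of_def)

lemma nth_prefix_of: "i < m \<Longrightarrow> prefix_of S m ! i = S i"
  by (simp add: prefix_of_def)

lemma take_prefix_of: "i \<le> m \<Longrightarrow> take i (prefix_of S m) = prefix_of S i"
  by (simp add: prefix_of_def take_map)

definition bit_prob ::
    "(bool list \<Rightarrow> bool list \<Rightarrow> bool) \<Rightarrow> (bool list \<Rightarrow> nat) \<Rightarrow> (nat \<Rightarrow> bool) \<Rightarrow> nat \<Rightarrow> real" where
  "bit_prob stored init S i =
     enc (prefix_of S i) (S i) (chain stored (prefix_of S i) (init (prefix_of S i)))"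

lemma bit_prob_pos: "0 < bit_prob stored init S i"
  by (simp add: bit_prob_def enc_pos)

lemma bit_prob_le_1: "bit_prob stored init S i \<le> 1"
  by (simp add: bit_prob_def enc_le_1)

lemma prob_model_prefix_of: "prob_model stored init (prefix_of S m) = (\<Prod>i<m. bit_prob stored init S i)"
  unfolding prob_model_def bit_prob_def
  by (rule prod.cong) (simp_all add: take_prefix_of nth_prefix_of)

lemma minus_log_prob_model_prefix_of:
  "- log 2 (prob_model stored init (prefix_of S m)) = (\<Sum>i<m. - log 2 (bit_prob stored init S i))"
proof -
  have "ln (\<Prod>i<m. bit_prob stored init S i) = (\<Sum>i<m. ln (bit_prob stored init S i))"
    using bit_prob_pos by (intro ln_prod) (auto simp: less_le)
  then show ?thesis
    unfolding prob_model_prefix_of log_def by (simp add: sum_divide_distrib[symmetric] sum_negf)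
qed

lemma code_len_bounds:
  "- log 2 (prob_model stored init y) \<le> code_len stored init y"
  "code_len stored init y \<le> - log 2 (prob_model stored init y) + 1"
  unfolding code_len_def by linarith+

lemma prob_model_prefix_of_le_pow:
  assumes "\<And>i. i0 \<le> i \<Longrightarrow> i < m \<Longrightarrow> bit_prob stored init S i \<le> q" and "0 \<le> q"
  shows "prob_model stored init (prefix_of S m) \<le> q ^ (m - i0)"
proof -
  have "(\<Prod>i<m. bit_prob stored init S i) \<le> (\<Prod>i<m. if i0 \<le> i then q else 1)"
    using assms bit_prob_pos[THEN less_imp_le] bit_prob_le_1 by (intro prod_mono) auto
  also have "\<dots> = q ^ card {i0..<m}"
    by (simp add: prod.If_cases Int_def atLeastLessThan_def lessThan_def Collect_conj_eq[symmetric] conj_commute)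
  finally show ?thesis
    by (simp add: prob_model_prefix_of)
qed

lemma log2_three_halves_ge: "4 / 7 \<le> log 2 (3 / 2 :: real)"
proof -
  have "(2 powr (4 / 7 :: real)) ^ 7 = 16"
    by (simp add: powr_realpow[symmetric] powr_powr)
  also have "\<dots> \<le> (3 / 2) ^ 7"
    by (simp add: power_divide)
  finally have "2 powr (4 / 7 :: real) \<le> 3 / 2"
    using power_mono_iff[of "2 powr (4 / 7 :: real)" "3 / 2" 7] by simp
  then show ?thesis
    using le_log_iff[of 2 "3 / 2" "4 / 7"] by linarith
qed

lemma lower_ratio_ge_half:
  assumes "\<And>i. i0 \<le> i \<Longrightarrow> bit_prob stored init S i \<le> 2 / 3"
  shows "1 / 2 \<le> lower_ratio (code_len stored init) S"
proof -
  have "ereal (1 / 2) \<le> ereal (code_len stored init (prefix_of S m) / real m)" if m: "8 * i0 + 1 \<le> m" for m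
  proof -
    let ?P = "prob_model stored init (prefix_of S m)"
    have "0 < ?P"
      by (simp add: prob_model_prefix_of bit_prob_pos prod_pos)
    moreover have "?P \<le> (2 / 3) ^ (m - i0)"
      using assms by (intro prob_model_prefix_of_le_pow) auto
    ultimately have "log 2 ?P \<le> real (m - i0) * log 2 (2 / 3)"
      by (simp add: log_nat_power[symmetric])
    moreover have "log 2 (2 / 3 :: real) = - log 2 (3 / 2)"
      by (simp add: log_divide)
    ultimately have "real (m - i0) * log 2 (3 / 2) \<le> code_len stored init (prefix_of S m)"
      using code_len_bounds(1)[of stored init "prefix_of S m"] by simp
    moreover have "real m / 2 \<le> real (m - i0) * log 2 (3 / 2)"
      using m log2_three_halves_ge mult_left_mono[OF log2_three_halves_ge, of "real (m - i0)"]
      by (simp add: of_nat_diff)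
    ultimately show ?thesis
      using m by (simp add: le_divide_eq)
  qed
  then have "ereal (1 / 2) \<le> lower_ratio (code_len stored init) S"
    unfolding lower_ratio_def by (intro Liminf_bounded eventually_sequentiallyI[of "8 * i0 + 1"]) auto
  then show ?thesis
    by (simp add: one_ereal_def divide_ereal_def)
qed

lemma code_len_prefix_of_nonneg: "0 \<le> code_len stored init (prefix_of S m)"
proof -
  have "0 \<le> - log 2 (prob_model stored init (prefix_of S m))"
    unfolding minus_log_prob_model_prefix_of
    using bit_prob_pos bit_prob_le_1 by (intro sum_nonneg) simp
  then show ?thesis
    using code_len_bounds(1) by (rule order.trans)
qed

lemma upper_ratio_eq_0I:
  assumes "(\<lambda>m. T (prefix_of S m) / real m) \<longlonglongrightarrow> 0"
  shows "upper_ratio T S = 0"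
proof -
  have "(\<lambda>m. ereal (T (prefix_of S m) / real m)) \<longlonglongrightarrow> ereal 0"
    using assms by (rule tendsto_ereal)
  then show ?thesis
    unfolding upper_ratio_def zero_ereal_def by (rule lim_imp_Limsup[rotated]) simp
qed

section \<open>PPM-k and PPM* on a single string\<close>

lemma length_sfx: "l \<le> length x \<Longrightarrow> length (sfx x l) = l"
  by (simp add: sfx_def)

lemma drop_sfx: "l' \<le> l \<Longrightarrow> l \<le> length x \<Longrightarrow> drop (l - l') (sfx x l) = sfx x l'"
  by (simp add: sfx_def)

text \<open>With K = 2 ^ l + 1, the other 2 ^ l - 1 words of length l occupy at least (K - 2) / K of the
  positions of x, which leaves at most 2 * length x / K occurrences for u.\<close>

lemma occ_le_2_occ_if_frequent:
  assumes "0 < l" "length u = l" "length v = l"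
    and frequent: "\<And>w. length w = l \<Longrightarrow> length x \<le> (2 ^ l + 1) * occ w x"
  shows "occ u x \<le> 2 * occ v x"
proof -
  let ?W = "{w :: bool list. length w = l}" and ?K = "2 ^ l + 1 :: nat" and ?N = "length x"
  have fin: "finite ?W"
    using finite_lists_length_eq[of "UNIV :: bool set" l] by simp
  have card: "card (?W - {u}) = 2 ^ l - 1"
    using card_lists_length_eq[of "UNIV :: bool set" l] assms(2) fin by simp
  have "occ u x + (\<Sum>w\<in>?W - {u}. occ w x) \<le> ?N"
    using sum_occ_le_length[OF fin _ assms(1), of x] sum.remove[OF fin, of u "\<lambda>w. occ w x"] assms(2)
    by simp
  then have "?K * occ u x + (\<Sum>w\<in>?W - {u}. ?K * occ w x) \<le> ?K * ?N"
    by (metis add_mult_distrib2 mult_le_mono2 sum_distrib_left)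
  moreover have "(2 ^ l - 1) * ?N \<le> (\<Sum>w\<in>?W - {u}. ?K * occ w x)"
    using sum_bounded_below[of "?W - {u}" ?N "\<lambda>w. ?K * occ w x"] frequent card by simp
  moreover have "?K * ?N = (2 ^ l - 1) * ?N + 2 * ?N"
    by (simp add: algebra_simps)
  ultimately have "?K * occ u x \<le> 2 * ?N"
    by linarith
  also have "\<dots> \<le> ?K * (2 * occ v x)"
    using frequent[OF assms(3)] by simp
  finally show ?thesis
    using mult_le_cancel1[of ?K "occ u x" "2 * occ v x"] by simp
qed

lemma init_k_eq:
  assumes "k \<le> length x" "0 < tot x (sfx x k)"
  shows "init_k k x = k"
  unfolding init_k_def
proof (rule Greatest_equality)
  show "k \<le> length x \<and> stored_k k x (sfx x k)"
    using assms by (simp add: stored_k_def length_sfx)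
next
  fix l assume "l \<le> length x \<and> stored_k k x (sfx x l)"
  then show "l \<le> k"
    using length_sfx[of l x] by (auto simp: stored_k_def)
qed

lemma enc_ppm_k_le:
  assumes "k < length x"
    and frequent: "\<And>w. length w = Suc k \<Longrightarrow> length x \<le> (2 ^ Suc k + 1) * occ w x"
  shows "enc x b (chain (stored_k k) x (init_k k x)) \<le> 2 / 3"
proof -
  let ?c = "sfx x k"
  have len_c: "length (?c @ [b']) = Suc k" for b'
    using assms(1) length_sfx[of k x] by simp
  have pos: "0 < cnt x ?c b'" for b'
  proof (rule gr0I)
    assume "cnt x ?c b' = 0"
    then show False
      using frequent[OF len_c[of b']] assms(1) by (simp add: cnt_def)
  qed
  then have "0 < tot x ?c" and esc: "esc x ?c = 2"
    by (simp_all add: tot_def esc_eq)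
  then have "init_k k x = k" and "stored_k k x ?c"
    using assms(1) init_k_eq[of k x] by (simp_all add: stored_k_def length_sfx)
  then obtain cs where "chain (stored_k k) x (init_k k x) = ?c # cs"
    using chain_eq_Cons by metis
  then have enc: "enc x b (chain (stored_k k) x (init_k k x))
      = real (cnt x ?c b) / (real (cnt x ?c b) + real (cnt x ?c (\<not> b)) + 2)"
    using pos[of b] esc by (simp add: tot_eq[of x ?c b])
  have "cnt x ?c b \<le> 2 * cnt x ?c (\<not> b)"
    unfolding cnt_def by (rule occ_le_2_occ_if_frequent[OF _ len_c len_c frequent]) simp_all
  then show ?thesis
    unfolding enc by (simp add: divide_le_eq)
qed

lemma stored_star_if_cnt_ge_2:
  assumes "2 \<le> cnt x c b"
  shows "stored_star x c"
proof (cases "c = []")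
  case False
  have "occ (c @ [b]) x \<le> occ (butlast c) x"
    using occ_le_occ_take[of "c @ [b]" x "length c - 1"] False by (simp add: butlast_conv_take)
  moreover have "0 < tot x c"
    using assms cnt_le_tot[of x c b] by simp
  moreover have "c = butlast c @ [last c]"
    using False by simp
  ultimately show ?thesis
    using assms unfolding stored_star_def cnt_def by (metis le_trans)
qed (simp add: stored_star_def)

lemma init_star_relevant: "init_star x \<le> length x" "stored_star x (sfx x (init_star x))"
proof -
  let ?D = "\<lambda>l. l \<le> length x \<and> stored_star x (sfx x l) \<and> esc x (sfx x l) = 1"
  let ?R = "\<lambda>l. l \<le> length x \<and> stored_star x (sfx x l)"
  have "?R (init_star x)"
  proof (cases "\<exists>l. ?D l")
    case True
    moreover have "init_star x = (LEAST l. ?D l)"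
      using True unfolding init_star_def by (rule if_P)
    ultimately show ?thesis
      using LeastI_ex[of ?D] by simp
  next
    case False
    have "?R 0"
      by (simp add: sfx_def stored_star_def)
    then have "?R (GREATEST l. ?R l)"
      by (rule GreatestI_nat[where b = "length x"]) simp
    moreover have "init_star x = (GREATEST l. ?R l)"
      using False unfolding init_star_def by (rule if_not_P)
    ultimately show ?thesis
      by simp
  qed
  then show "init_star x \<le> length x" "stored_star x (sfx x (init_star x))"
    by simp_all
qed

lemma init_star_le_deterministic:
  assumes "l \<le> length x" "stored_star x (sfx x l)" "esc x (sfx x l) = 1"
  shows "init_star x \<le> l" "esc x (sfx x (init_star x)) = 1"
proof -
  let ?D = "\<lambda>l. l \<le> length x \<and> stored_star x (sfx x l) \<and> esc x (sfx x l) = 1"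
  have "?D l"
    using assms by blast
  moreover from this have "init_star x = (LEAST l. ?D l)"
    unfolding init_star_def by (intro if_P) blast
  ultimately show "init_star x \<le> l" "esc x (sfx x (init_star x)) = 1"
    using Least_le[of ?D l] LeastI[of ?D l] by simp_all
qed

lemma esc_ne_1_below_init_star:
  assumes "l < init_star x" "l \<le> length x" "stored_star x (sfx x l)"
  shows "esc x (sfx x l) \<noteq> 1"
  using init_star_le_deterministic(1)[of l x] assms by fastforce

lemma enc_ppm_star_ge: "1 / (real (length x) + 2) ^ 2 \<le> enc x b (chain stored_star x (init_star x))"
proof -
  let ?L = "real (length x)" and ?c = "sfx x (init_star x)"
  obtain cs where chain: "chain stored_star x (init_star x) = ?c # cs"
    and cs: "\<forall>c\<in>set cs. stored_star x c \<and> (\<exists>l'<init_star x. c = sfx x l')"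
    using chain_eq_Cons[of stored_star x "init_star x"] init_star_relevant(2)[of x] by blast
  have "esc x c \<noteq> 1" if "c \<in> set cs" for c
    using cs that init_star_relevant(1)[of x] esc_ne_1_below_init_star by fastforce
  then have rest: "1 / (?L + 2) \<le> enc x b cs"
    by (rule enc_ge_if_nondeterministic)
  show ?thesis
  proof (cases "esc x ?c = 1")
    case True
    then show ?thesis
      unfolding chain by (rule enc_Cons_deterministic_ge[OF _ rest])
  next
    case False
    then have "1 / (?L + 2) \<le> enc x b (?c # cs)"
      using \<open>\<And>c. c \<in> set cs \<Longrightarrow> esc x c \<noteq> 1\<close> by (intro enc_ge_if_nondeterministic) auto
    moreover have "1 / (?L + 2) ^ 2 \<le> 1 / (?L + 2)"
      by (simp add: power2_eq_square divide_le_eq field_simps)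
    ultimately show ?thesis
      unfolding chain by linarith
  qed
qed

text \<open>The shortest deterministic context predicts the bit at least as often as any longer one.\<close>

lemma enc_ppm_star_ge_deterministic:
  assumes "l \<le> length x" "2 \<le> cnt x (sfx x l) b" "cnt x (sfx x l) (\<not> b) = 0"
  shows "real (cnt x (sfx x l) b) / real (cnt x (sfx x l) b + 1)
           \<le> enc x b (chain stored_star x (init_star x))"
proof -
  let ?c = "sfx x l" and ?l0 = "init_star x"
  let ?f = "cnt x ?c b" and ?g = "cnt x (sfx x ?l0) b"
  have "stored_star x ?c"
    using assms(2) by (rule stored_star_if_cnt_ge_2)
  moreover have "esc x ?c = 1"
    using assms(2,3) esc_eq_1_iff[of x ?c b] by simp
  ultimately have l0: "?l0 \<le> l" "esc x (sfx x ?l0) = 1"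
    using init_star_le_deterministic assms(1) by blast+
  have "drop (l - ?l0) (?c @ [b]) = sfx x ?l0 @ [b]"
    using l0(1) assms(1) length_sfx[of l x] drop_sfx[of ?l0 l x] by simp
  then have "?f \<le> ?g"
    using occ_le_occ_drop[of "l - ?l0" "?c @ [b]" x] length_sfx[OF assms(1)] by (simp add: cnt_def)
  then have g_pos: "0 < ?g"
    using assms(2) by linarith
  then have "cnt x (sfx x ?l0) (\<not> b) = 0"
    using l0(2) esc_eq_1_iff[of x "sfx x ?l0" b] by simp
  moreover obtain cs where "chain stored_star x ?l0 = sfx x ?l0 # cs"
    using chain_eq_Cons[of stored_star x "init_star x"] init_star_relevant(2)[of x] by blast
  ultimately have "enc x b (chain stored_star x ?l0) = real ?g / real (?g + 1)"
    using l0(2) g_pos by (simp add: tot_eq[of x "sfx x ?l0" b])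
  moreover have "real ?f / real (?f + 1) \<le> real ?g / real (?g + 1)"
    using \<open>?f \<le> ?g\<close> by (simp add: divide_le_eq field_simps)
  ultimately show ?thesis
    by simp
qed

lemma sfx_append_concat_replicate:
  assumes "0 < a" "p \<le> length X"
  shows "sfx (P @ concat (replicate a X) @ take p X) (length X + p) = X @ take p X"
proof -
  let ?Z = "concat (replicate a X) @ take p X"
  have "length (P @ ?Z) - (length X + p) = length P + (a - 1) * length X"
    using assms by (simp add: length_concat sum_list_replicate diff_mult_distrib)
  then have "sfx (P @ ?Z) (length X + p) = drop ((a - 1) * length X) ?Z"
    by (simp add: sfx_def)
  also have "\<dots> = concat (replicate (a - (a - 1)) X) @ take p X"
    by (rule drop_concat_replicate_append) simp
  finally show ?thesis
    using assms(1) by simp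
qed

lemma cnt_append_concat_replicate_ge:
  assumes "p < length X"
  shows "a - 1 \<le> cnt (P @ concat (replicate a X) @ take p X) (X @ take p X) (X ! p)"
proof -
  let ?x = "P @ concat (replicate a X) @ take p X" and ?w = "(X @ take p X) @ [X ! p]"
  have "length P + j * length X \<in> occ_positions ?w ?x" if j: "j < a - 1" for j
  proof -
    have "a - j = Suc (Suc (a - j - 2))"
      using j by simp
    then have rep: "concat (replicate (a - j) X) = X @ X @ concat (replicate (a - j - 2) X)"
      by (metis append.assoc concat.simps(2) replicate_Suc)
    have "drop (length P + j * length X) ?x = drop (j * length X) (concat (replicate a X) @ take p X)"
      by simp
    also have "\<dots> = X @ X @ concat (replicate (a - j - 2) X) @ take p X"
      using j rep by (subst drop_concat_replicate_append) simp_all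
    moreover have "take p X @ [X ! p] = take (Suc p) X"
      using assms by (simp add: take_Suc_conv_app_nth)
    ultimately have "take (length ?w) (drop (length P + j * length X) ?x) = ?w"
      using assms by simp
    moreover have "(j + 2) * length X \<le> a * length X"
      using j by (intro mult_le_mono1) simp
    then have "length P + j * length X + length ?w \<le> length ?x"
      using assms by (simp add: length_concat sum_list_replicate algebra_simps)
    ultimately show ?thesis
      unfolding occ_positions_def by blast
  qed
  then have "(\<lambda>j. length P + j * length X) ` {..<a - 1} \<subseteq> occ_positions ?w ?x"
    by auto
  then have "card ((\<lambda>j. length P + j * length X) ` {..<a - 1}) \<le> occ ?w ?x"
    unfolding occ_eq_card_occ_positions by (rule card_mono[rotated]) simp
  moreover have "inj_on (\<lambda>j. length P + j * length X) {..<a - 1}"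
    using assms by (auto simp: inj_on_def)
  ultimately show ?thesis
    by (simp add: cnt_def card_image)
qed

section \<open>The witness sequence\<close>

definition marked_words :: "nat \<Rightarrow> bool list" where
  "marked_words n = concat (map (\<lambda>u. u @ [True]) (List.n_lists n [False, True]))"

definition segment :: "nat \<Rightarrow> bool list" where
  "segment n = replicate (n + 1) False @ True # marked_words n"

definition seg_len :: "nat \<Rightarrow> nat" where
  "seg_len n = length (segment n)"

definition reps :: "nat \<Rightarrow> nat" where
  "reps n = 64 ^ (n + 1)"

definition block :: "nat \<Rightarrow> bool list" where
  "block n = concat (replicate (reps n) (segment n))"

primrec blocks :: "nat \<Rightarrow> bool list" where
  "blocks 0 = []"
| "blocks (Suc n) = blocks n @ block n"

definition block_start :: "nat \<Rightarrow> nat" where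
  "block_start n = length (blocks n)"

text \<open>Every block is nonempty, so bit i already lies in the first i + 1 blocks.\<close>

definition witness :: "nat \<Rightarrow> bool" where
  "witness i = blocks (Suc i) ! i"

lemma set_n_lists_bool: "set (List.n_lists n [False, True]) = {u. length u = n}"
  by (auto simp: set_n_lists)

lemma length_marked_words: "length (marked_words n) = (n + 1) * 2 ^ n"
proof -
  have "length (marked_words n) = (\<Sum>u\<leftarrow>List.n_lists n [False, True]. n + 1)"
    unfolding marked_words_def length_concat map_map comp_def
    by (rule arg_cong[where f = sum_list], rule map_cong) (auto dest: length_n_lists_elem)
  also have "\<dots> = (n + 1) * 2 ^ n"
    by (simp add: sum_list_triv length_n_lists numeral_2_eq_2 algebra_simps)
  finally show ?thesis .
qed

lemma marked_words_snoc_True: "\<exists>y. marked_words n = y @ [True]"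
proof -
  have "List.n_lists n [False, True] \<noteq> []"
    using length_n_lists[of n "[False, True]"] by auto
  then obtain us u where "List.n_lists n [False, True] = us @ [u]"
    by (cases rule: rev_exhaust) auto
  then show ?thesis
    by (simp add: marked_words_def)
qed

lemma occ_marked_words_ge:
  assumes "w \<noteq> []" "length w \<le> n"
  shows "(n + 1 - length w) * 2 ^ (n - length w) \<le> occ w (marked_words n)"
proof -
  have "(n + 1 - length w) * 2 ^ (n - length w) = (\<Sum>u\<leftarrow>List.n_lists n [False, True]. occ w u)"
    using sum_occ_lists_length_eq[OF assms(2)]
    by (simp add: sum_list_distinct_conv_sum_set distinct_n_lists set_n_lists_bool)
  also have "\<dots> \<le> (\<Sum>u\<leftarrow>List.n_lists n [False, True]. occ w (u @ [True]))"
    by (rule sum_list_mono) (rule occ_le_occ_append)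
  also have "\<dots> \<le> occ w (marked_words n)"
    unfolding marked_words_def
    using sum_list_occ_le_occ_concat[OF assms(1), of "map (\<lambda>u. u @ [True]) (List.n_lists n [False, True])"]
    by (simp add: comp_def)
  finally show ?thesis .
qed

lemma seg_len_eq: "seg_len n = n + 2 + (n + 1) * 2 ^ n"
  by (simp add: seg_len_def segment_def length_marked_words)

lemma seg_len_pos: "0 < seg_len n"
  by (simp add: seg_len_eq)

lemma seg_len_le: "seg_len n \<le> 4 ^ (n + 1)"
proof -
  have "n + 1 \<le> 2 ^ n"
    by (induction n) auto
  then have "(n + 1) * 2 ^ n \<le> 4 ^ n" and "n + 2 \<le> 2 * 4 ^ n"
    using mult_le_mono1[of "n + 1" "2 ^ n" "2 ^ n"] power_mono[of 2 4 n]
    by (simp_all add: power_mult_distrib[symmetric])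
  then show ?thesis
    by (simp add: seg_len_eq)
qed

lemma length_block: "length (block n) = reps n * seg_len n"
  by (simp add: block_def length_concat seg_len_def sum_list_replicate)

lemma block_start_0 [simp]: "block_start 0 = 0"
  by (simp add: block_start_def)

lemma block_start_Suc: "block_start (Suc n) = block_start n + reps n * seg_len n"
  by (simp add: block_start_def length_block)

lemma strict_mono_block_start: "strict_mono block_start"
  unfolding strict_mono_Suc_iff by (simp add: block_start_Suc reps_def seg_len_pos)

lemma le_block_start: "n \<le> block_start n"
  using strict_mono_block_start by (rule strict_mono_imp_increasing)

lemma block_start_le: "block_start n \<le> 2 * 256 ^ n"
proof (induction n)
  case (Suc n)
  have "reps n * seg_len n \<le> 64 ^ (n + 1) * 4 ^ (n + 1)"
    unfolding reps_def by (rule mult_le_mono2) (rule seg_len_le)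
  also have "\<dots> = 256 ^ (n + 1)"
    by (simp add: power_mult_distrib[symmetric])
  finally show ?case
    using Suc by (simp add: block_start_Suc)
qed simp

lemma blocks_append: "m \<le> n \<Longrightarrow> \<exists>z. blocks n = blocks m @ z"
proof (induction n)
  case (Suc n)
  then show ?case
    by (cases "m = Suc n") auto
qed simp

lemma nth_blocks:
  assumes "i < block_start m" "i < block_start n"
  shows "blocks m ! i = blocks n ! i"
proof (cases "m \<le> n")
  case True
  then obtain z where "blocks n = blocks m @ z"
    using blocks_append by blast
  then show ?thesis
    using assms by (simp add: nth_append block_start_def)
next
  case False
  then obtain z where "blocks m = blocks n @ z"
    using blocks_append[of n m] by auto
  then show ?thesis
    using assms by (simp add: nth_append block_start_def)
qed

lemma witness_eq_nth_blocks: "i < block_start n \<Longrightarrow> witness i = blocks n ! i"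
  unfolding witness_def
  by (rule nth_blocks) (use le_block_start[of "Suc i"] in auto)

lemma prefix_of_witness: "m \<le> block_start n \<Longrightarrow> prefix_of witness m = take m (blocks n)"
  by (auto simp: prefix_of_def list_eq_iff_nth_eq witness_eq_nth_blocks block_start_def)

lemma in_block:
  assumes "block_start n0 \<le> i"
  shows "\<exists>n\<ge>n0. block_start n \<le> i \<and> i < block_start (Suc n)"
proof -
  let ?P = "\<lambda>n. block_start n \<le> i"
  let ?n = "Greatest ?P"
  have bound: "n \<le> i" if "?P n" for n
    using that le_block_start[of n] by simp
  have "?P ?n"
    using assms bound by (rule GreatestI_nat)
  moreover have "i < block_start (Suc ?n)"
  proof (rule ccontr)
    assume "\<not> i < block_start (Suc ?n)"
    then have "Suc ?n \<le> ?n"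
      using bound by (intro Greatest_le_nat[where b = i]) auto
    then show False
      by simp
  qed
  moreover have "n0 \<le> ?n"
    using assms bound by (rule Greatest_le_nat)
  ultimately show ?thesis
    by blast
qed

lemma position_in_block:
  assumes "block_start n0 \<le> i"
  obtains n a p where "n0 \<le> n" "a < reps n" "p < seg_len n" "i = block_start n + a * seg_len n + p"
proof -
  obtain n where n: "n0 \<le> n" "block_start n \<le> i" "i < block_start (Suc n)"
    using in_block[OF assms] by blast
  let ?y = "i - block_start n"
  have "?y div seg_len n < reps n"
    using n seg_len_pos[of n] by (simp add: block_start_Suc div_less_iff_less_mult)
  moreover have "i = block_start n + ?y div seg_len n * seg_len n + ?y mod seg_len n"
    using n(2) by simp
  moreover have "?y mod seg_len n < seg_len n"
    using seg_len_pos[of n] by simp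
  ultimately show thesis
    using that n(1) by blast
qed

lemma in_block_le:
  assumes "a < reps n" "p < seg_len n"
  shows "block_start n + a * seg_len n + p < block_start (Suc n)"
proof -
  have "a * seg_len n + p < (a + 1) * seg_len n"
    using assms by simp
  also have "\<dots> \<le> reps n * seg_len n"
    using assms by (intro mult_le_mono1) simp
  finally show ?thesis
    by (simp add: block_start_Suc)
qed

lemma prefix_of_witness_in_block:
  assumes "a < reps n" "p < seg_len n"
  shows "prefix_of witness (block_start n + a * seg_len n + p)
           = blocks n @ concat (replicate a (segment n)) @ take p (segment n)"
proof -
  have "prefix_of witness (block_start n + a * seg_len n + p)
      = take (block_start n + a * seg_len n + p) (blocks (Suc n))"
    using prefix_of_witness in_block_le[OF assms] less_imp_le by blast
  also have "\<dots> = take (block_start n + a * seg_len n + p) (blocks n @ block n)"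
    by simp
  also have "\<dots> = blocks n @ take (a * seg_len n + p) (block n)"
    by (simp add: block_start_def add.assoc)
  also have "take (a * seg_len n + p) (block n) = concat (replicate a (segment n)) @ take p (segment n)"
    unfolding block_def seg_len_def using assms by (intro take_concat_replicate) (auto simp: seg_len_def)
  finally show ?thesis .
qed

lemma witness_in_block:
  assumes "a < reps n" "p < seg_len n"
  shows "witness (block_start n + a * seg_len n + p) = segment n ! p"
proof -
  have "witness (block_start n + a * seg_len n + p) = blocks (Suc n) ! (block_start n + a * seg_len n + p)"
    using in_block_le[OF assms] by (rule witness_eq_nth_blocks)
  also have "\<dots> = (concat (replicate (reps n) (segment n)) @ []) ! (a * length (segment n) + p)"
    by (simp add: nth_append block_start_def block_def seg_len_def add.assoc)
  also have "\<dots> = segment n ! p"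
    using assms by (intro nth_concat_replicate_append) (auto simp: seg_len_def)
  finally show ?thesis .
qed

section \<open>Frequent words make PPM-k incompressible\<close>

lemma occ_segment_ge:
  assumes "w \<noteq> []" "length w \<le> n"
  shows "(n + 1 - length w) * 2 ^ (n - length w) \<le> occ w (segment n)"
  using occ_marked_words_ge[OF assms]
    occ_le_occ_append_left[OF assms(1), where x = "replicate (n + 1) False @ [True]" and y = "marked_words n"]
  by (simp add: segment_def)

lemma seg_len_plus_pow_le:
  assumes "(l + 2) * (2 ^ l + 1) \<le> j"
  shows "seg_len j + 2 ^ j \<le> (2 ^ l + 1) * ((j + 1 - l) * 2 ^ (j - l))"
proof -
  define K where "K = (2::nat) ^ l"
  define d where "d = j - l"
  define D where "D = (2::nat) ^ d"
  have "l \<le> j"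
    using assms by (rule order.trans[rotated]) (simp add: algebra_simps)
  then have j: "j = l + d" and pow_j: "(2::nat) ^ j = K * D"
    by (simp_all add: d_def K_def D_def power_add[symmetric])
  have "(l + 1) * K + K + 3 \<le> d + 1"
    using assms by (simp add: j K_def algebra_simps)
  then have big: "((l + 1) * K + K + 3) * D \<le> (d + 1) * D"
    by (rule mult_le_mono1)
  have "l + 1 \<le> K" "d + 1 \<le> D" "K \<le> K * D"
    using less_exp[of l] less_exp[of d] by (simp_all add: K_def D_def Suc_le_eq)
  then have small: "l + d + 2 \<le> (K + 3) * D"
    unfolding distrib_right by linarith
  have "seg_len j + 2 ^ j = (l + d + 1) * (K * D) + (l + d + 2) + K * D"
    unfolding seg_len_eq pow_j by (simp add: j algebra_simps)
  also have "\<dots> \<le> (l + d + 1) * (K * D) + (K + 3) * D + K * D"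
    using small by simp
  also have "\<dots> = (d + 1) * (K * D) + ((l + 1) * K + K + 3) * D"
    by (simp add: algebra_simps)
  also have "\<dots> \<le> (d + 1) * (K * D) + (d + 1) * D"
    using big by simp
  also have "\<dots> = (2 ^ l + 1) * ((j + 1 - l) * 2 ^ (j - l))"
    by (simp add: K_def D_def d_def[symmetric] j algebra_simps)
  finally show ?thesis .
qed

lemma occ_segment_big:
  assumes "w \<noteq> []" "(length w + 2) * (2 ^ length w + 1) \<le> j"
  shows "seg_len j + 2 ^ j \<le> (2 ^ length w + 1) * occ w (segment j)"
proof -
  have "length w \<le> j"
    using assms(2) by (rule order.trans[rotated]) (simp add: algebra_simps)
  then show ?thesis
    using seg_len_plus_pow_le[OF assms(2)] occ_segment_ge[OF assms(1)] mult_le_mono2 order.trans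
    by blast
qed

text \<open>Blocks from j1 on are paid for by occurrences of w with slack reps j * 2 ^ j each; the slack
  of the previous block later covers the blocks before j1 and the current segment.\<close>

lemma occ_blocks_ge:
  assumes "w \<noteq> []"
  defines "j1 \<equiv> (length w + 2) * (2 ^ length w + 1)"
  shows "block_start n + (\<Sum>j\<in>{j1..<n}. reps j * 2 ^ j) \<le> (2 ^ length w + 1) * occ w (blocks n) + block_start j1"
proof (induction n)
  case (Suc n)
  let ?K = "2 ^ length w + 1"
  show ?case
  proof (cases "j1 \<le> n")
    case False
    then have "block_start (Suc n) \<le> block_start j1"
      using strict_mono_block_start by (simp add: strict_mono_less_eq)
    then show ?thesis
      using False by simp
  next
    case True
    have "occ w (blocks n) + reps n * occ w (segment n) \<le> occ w (blocks (Suc n))"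
      using occ_append_ge[OF assms(1), of "blocks n" "block n"]
        occ_concat_replicate_ge[OF assms(1), of "reps n" "segment n"] by (simp add: block_def)
    then have blocks: "?K * (occ w (blocks n) + reps n * occ w (segment n)) \<le> ?K * occ w (blocks (Suc n))"
      by (rule mult_le_mono2)
    have segment: "reps n * (seg_len n + 2 ^ n) \<le> reps n * (?K * occ w (segment n))"
      using occ_segment_big[OF assms(1)] True by (simp add: j1_def)
    have "block_start (Suc n) + (\<Sum>j\<in>{j1..<Suc n}. reps j * 2 ^ j)
        = (block_start n + (\<Sum>j\<in>{j1..<n}. reps j * 2 ^ j)) + reps n * (seg_len n + 2 ^ n)"
      using True by (simp add: block_start_Suc algebra_simps)
    also have "\<dots> \<le> (?K * occ w (blocks n) + block_start j1) + reps n * (?K * occ w (segment n))"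
      using Suc.IH segment by (rule add_mono)
    also have "\<dots> = ?K * (occ w (blocks n) + reps n * occ w (segment n)) + block_start j1"
      by (simp add: algebra_simps)
    finally show ?thesis
      using blocks by linarith
  qed
qed simp

lemma block_start_plus_seg_len_le:
  assumes "2 * j1 + 2 \<le> n"
  shows "block_start j1 + seg_len n \<le> reps (n - 1) * 2 ^ (n - 1)"
proof -
  have "block_start j1 \<le> 4096 * 4096 ^ j1"
    using block_start_le[of j1] power_mono[of "256::nat" 4096 j1] by simp
  also have "\<dots> = 64 ^ (2 * j1 + 2)"
    by (simp add: power_mult power_add)
  also have "\<dots> \<le> 64 ^ n"
    using assms by (intro power_increasing) simp_all
  finally have "block_start j1 \<le> 64 ^ n" .
  moreover have "seg_len n \<le> 64 ^ n"
  proof -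
    have "(4::nat) \<le> 16 ^ n"
      using assms power_increasing[of 1 n "16::nat"] by simp
    then have "4 * 4 ^ n \<le> 16 ^ n * (4::nat) ^ n"
      by (rule mult_le_mono1)
    then show ?thesis
      using seg_len_le[of n] by (simp add: power_mult_distrib[symmetric])
  qed
  moreover have "(2::nat) \<le> 2 ^ (n - 1)"
    using assms power_increasing[of 1 "n - 1" "2::nat"] by simp
  moreover have "reps (n - 1) = 64 ^ n"
    using assms by (simp add: reps_def)
  ultimately show ?thesis
    by (metis add_le_mono mult_2_right mult_le_mono2 order.trans)
qed

lemma occ_prefix_of_witness_ge:
  assumes "w \<noteq> []" and n: "2 * ((length w + 2) * (2 ^ length w + 1)) + 2 \<le> n"
    and a: "a < reps n" and p: "p < seg_len n"
  defines "i \<equiv> block_start n + a * seg_len n + p"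
  shows "i \<le> (2 ^ length w + 1) * occ w (prefix_of witness i)"
proof -
  let ?K = "2 ^ length w + 1" and ?j1 = "(length w + 2) * (2 ^ length w + 1)"
  have "occ w (blocks n) + a * occ w (segment n) \<le> occ w (prefix_of witness i)"
    using occ_append_ge[OF assms(1), of "blocks n" "concat (replicate a (segment n)) @ take p (segment n)"]
      occ_concat_replicate_ge[OF assms(1), of a "segment n"]
      occ_le_occ_append[of w "concat (replicate a (segment n))" "take p (segment n)"]
    unfolding i_def prefix_of_witness_in_block[OF a p] by linarith
  then have occ: "?K * (occ w (blocks n) + a * occ w (segment n)) \<le> ?K * occ w (prefix_of witness i)"
    by (rule mult_le_mono2)
  have "n - 1 \<in> {?j1..<n}"
    using n by simp
  then have "reps (n - 1) * 2 ^ (n - 1) \<le> (\<Sum>j\<in>{?j1..<n}. reps j * 2 ^ j)"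
    by (intro member_le_sum) simp_all
  then have "block_start n + seg_len n \<le> ?K * occ w (blocks n)"
    using occ_blocks_ge[OF assms(1), of n] block_start_plus_seg_len_le[OF n] by linarith
  moreover have "a * seg_len n \<le> a * (?K * occ w (segment n))"
    using occ_segment_big[OF assms(1), of n] n by (intro mult_le_mono2) linarith
  ultimately have "i \<le> ?K * occ w (blocks n) + a * (?K * occ w (segment n))"
    using p unfolding i_def by linarith
  also have "\<dots> = ?K * (occ w (blocks n) + a * occ w (segment n))"
    by (simp add: algebra_simps)
  finally show ?thesis
    using occ by linarith
qed

lemma bit_prob_ppm_k_le:
  assumes "block_start (2 * ((k + 3) * (2 ^ Suc k + 1)) + 2) \<le> i"
  shows "bit_prob (stored_k k) (init_k k) witness i \<le> 2 / 3"
proof -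
  obtain n a p where n: "2 * ((k + 3) * (2 ^ Suc k + 1)) + 2 \<le> n" and a: "a < reps n" and p: "p < seg_len n"
    and i: "i = block_start n + a * seg_len n + p"
    using position_in_block[OF assms] by blast
  have "k < i"
    using le_block_start[of n] n i by simp
  moreover have "i \<le> (2 ^ Suc k + 1) * occ w (prefix_of witness i)" if "length w = Suc k" for w
  proof -
    have "w \<noteq> []"
      using that by auto
    then show ?thesis
      using occ_prefix_of_witness_ge[of w n a p] that n a p i by (simp add: numeral_3_eq_3)
  qed
  ultimately show ?thesis
    unfolding bit_prob_def by (intro enc_ppm_k_le) simp_all
qed

lemma lower_ratio_ppm_k_witness: "1 / 2 \<le> lower_ratio (ppm_k_len k) witness"
proof -
  have "ppm_k_len k = code_len (stored_k k) (init_k k)"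
    by (simp add: ppm_k_len_def fun_eq_iff)
  then show ?thesis
    using lower_ratio_ge_half[OF bit_prob_ppm_k_le] by simp
qed

section \<open>Deterministic contexts for PPM*\<close>

lemma zero_runs_marked_words: "zero_runs (n + 1) (marked_words n) = {}"
  unfolding marked_words_def
proof (rule zero_runs_concat)
  fix u assume "u \<in> set (map (\<lambda>u. u @ [True]) (List.n_lists n [False, True]))"
  then obtain v where "length v = n" "u = v @ [True]"
    by (auto dest: length_n_lists_elem)
  then show "zero_runs (n + 1) u = {} \<and> (u \<noteq> [] \<longrightarrow> last u)"
    using zero_runs_snoc_True[of v "n + 1"] by simp
qed simp

lemma last_segment: "last (segment n)"
  using marked_words_snoc_True[of n] by (auto simp: segment_def)

lemma zero_runs_segment: "zero_runs (n + 2) (segment n) = {}"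
proof -
  have "zero_runs (n + 2) (replicate (n + 1) False @ [True]) = {}"
    by (rule zero_runs_snoc_True) simp
  moreover have "zero_runs (n + 2) (marked_words n) = {}"
    using zero_runs_mono[of "n + 1" "n + 2" "marked_words n"] zero_runs_marked_words by auto
  ultimately show ?thesis
    unfolding segment_def using zero_runs_append[of "n + 2" "replicate (n + 1) False @ [True]"] by simp
qed

lemma block_snoc: "\<exists>y. block n = y @ segment n"
proof -
  have "concat (replicate (Suc r) xs) = concat (replicate r xs) @ xs" for r and xs :: "bool list"
    by (induction r) auto
  moreover have "reps n = Suc (reps n - 1)"
    by (simp add: reps_def)
  ultimately show ?thesis
    unfolding block_def by metis
qed

lemma zero_runs_blocks: "zero_runs (n + 1) (blocks n) = {} \<and> (blocks n \<noteq> [] \<longrightarrow> last (blocks n))"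
proof (induction n)
  case (Suc n)
  have "zero_runs (n + 2) (block n) = {}"
    unfolding block_def by (rule zero_runs_concat) (use zero_runs_segment last_segment segment_def in auto)
  moreover have "zero_runs (n + 2) (blocks n) = {}"
    using Suc zero_runs_mono[of "n + 1" "n + 2" "blocks n"] by auto
  moreover have "block n \<noteq> [] \<and> last (block n)"
    using block_snoc[of n] last_segment[of n] by (auto simp: segment_def)
  ultimately show ?case
    using Suc zero_runs_append[of "n + 2" "blocks n" "block n"] by (simp add: last_append)
qed (simp add: occ_positions_def)

lemma nth_segment_less: "l < n + 1 \<Longrightarrow> segment n ! l = False"
  by (simp add: segment_def nth_append del: replicate_Suc)

lemma nth_segment_marker: "segment n ! (n + 1) = True"
  by (simp add: segment_def nth_append)

lemma zero_runs_segment_append: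
  assumes q: "q \<in> zero_runs (n + 1) (segment n @ ys)"
  shows "q = 0 \<or> seg_len n \<le> q"
proof (rule ccontr)
  assume "\<not> (q = 0 \<or> seg_len n \<le> q)"
  then have "0 < q" "q < seg_len n"
    by auto
  have zeros: "\<forall>l<n + 1. (segment n @ ys) ! (q + l) = False"
    using q unfolding mem_zero_runs_iff by blast
  show False
  proof (cases "q \<le> n + 1")
    case True
    have "n + 1 < length (segment n)"
      by (simp add: segment_def)
    then show False
      using zeros[rule_format, of "n + 1 - q"] True \<open>0 < q\<close> nth_segment_marker[of n]
      by (simp add: nth_append del: replicate_Suc)
  next
    case False
    have "segment n @ ys = (replicate (n + 1) False @ [True]) @ (marked_words n @ ys)"
      by (simp add: segment_def)
    then have "q - (n + 2) \<in> zero_runs (n + 1) (marked_words n @ ys)"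
      using occ_positions_append_right[of q "replicate (n + 1) False" "replicate (n + 1) False @ [True]"] q False
      by simp
    moreover have "marked_words n \<noteq> [] \<Longrightarrow> last (marked_words n)"
      using marked_words_snoc_True[of n] by auto
    ultimately have "length (marked_words n) \<le> q - (n + 2)"
      using zero_runs_append_ge zero_runs_marked_words by blast
    then show False
      using \<open>q < seg_len n\<close> False by (simp add: seg_len_def segment_def)
  qed
qed

lemma zero_runs_segments:
  assumes "p < seg_len n"
    and "q \<in> zero_runs (n + 1) (concat (replicate a (segment n)) @ take p (segment n))"
  shows "\<exists>j\<le>a. q = j * seg_len n"
  using assms(2)
proof (induction a arbitrary: q)
  case 0
  then have "q \<in> zero_runs (n + 1) (take p (segment n) @ drop p (segment n))"
    using occ_positions_mono_append[of _ "take p (segment n)" "drop p (segment n)"] by auto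
  then have "q = 0 \<or> seg_len n \<le> q"
    using zero_runs_segment_append[of q n "[]"] by simp
  moreover have "q < seg_len n"
    using 0 assms(1) unfolding mem_zero_runs_iff by (simp add: seg_len_def)
  ultimately show ?case
    by simp
next
  case (Suc a)
  then have q: "q \<in> zero_runs (n + 1) (segment n @ concat (replicate a (segment n)) @ take p (segment n))"
    by simp
  show ?case
  proof (cases "q = 0")
    case False
    then have "seg_len n \<le> q"
      using zero_runs_segment_append[OF q] by simp
    then have "q - seg_len n \<in> zero_runs (n + 1) (concat (replicate a (segment n)) @ take p (segment n))"
      using occ_positions_append_right[OF q] by (simp add: seg_len_def)
    then obtain j where "j \<le> a" "q - seg_len n = j * seg_len n"
      using Suc.IH by blast
    then show ?thesis
      using \<open>seg_len n \<le> q\<close> by (intro exI[of _ "Suc j"]) auto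
  next
    case True
    then show ?thesis
      by (intro exI[of _ 0]) simp
  qed
qed

text \<open>The context starts with a run of n + 1 zeros, which in the prefix occurs only at
  segment boundaries; hence the context is always followed by the same bit.\<close>

lemma occ_positions_context_in_block:
  assumes a: "a < reps n" and p: "p < seg_len n"
    and q: "q \<in> occ_positions ((segment n @ take p (segment n)) @ [b])
                (prefix_of witness (block_start n + a * seg_len n + p))"
  shows "b = segment n ! p"
proof -
  let ?X = "segment n" and ?Z = "concat (replicate a (segment n)) @ take p (segment n)"
  let ?w = "(?X @ take p ?X) @ [b]"
  have x: "prefix_of witness (block_start n + a * seg_len n + p) = blocks n @ ?Z"
    by (rule prefix_of_witness_in_block[OF a p])
  have "take (n + 1) ?w = replicate (n + 1) False"
    using nth_segment_less[of _ n] by (auto simp: list_eq_iff_nth_eq segment_def nth_append)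
  then have "q \<in> zero_runs (n + 1) (blocks n @ ?Z)"
    using occ_positions_subset_take[of ?w _ "n + 1"] q x by auto
  moreover have "zero_runs (n + 1) (blocks n) = {}" "blocks n \<noteq> [] \<Longrightarrow> last (blocks n)"
    using zero_runs_blocks by auto
  ultimately have bs: "block_start n \<le> q" and "q - block_start n \<in> zero_runs (n + 1) ?Z"
    using zero_runs_append_ge occ_positions_append_right unfolding block_start_def by blast+
  then obtain j where q_eq: "q = block_start n + j * seg_len n"
    using zero_runs_segments[OF p] by (metis le_add_diff_inverse)
  have len_w: "length ?w = seg_len n + p + 1"
    using p by (simp add: seg_len_def)
  have "q + length ?w \<le> length (prefix_of witness (block_start n + a * seg_len n + p))"
    using q unfolding mem_occ_positions_iff_nth by blast
  then have "q + length ?w \<le> block_start n + a * seg_len n + p"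
    by simp
  then have "Suc j * seg_len n < a * seg_len n"
    using len_w q_eq by simp
  then have "Suc j < a"
    by (rule mult_less_cancel2[THEN iffD1, THEN conjunct2])
  have "b = ?w ! (seg_len n + p)"
    using p by (simp add: nth_append seg_len_def)
  also have "\<dots> = (blocks n @ ?Z) ! (q + (seg_len n + p))"
    using q x len_w by (simp add: mem_occ_positions_iff_nth)
  also have "\<dots> = ?Z ! (Suc j * length ?X + p)"
    using q_eq by (simp add: nth_append block_start_def seg_len_def algebra_simps)
  also have "\<dots> = ?X ! p"
    using \<open>Suc j < a\<close> p by (intro nth_concat_replicate_append) (simp_all add: seg_len_def)
  finally show ?thesis .
qed

lemma bit_prob_ppm_star_in_block:
  assumes "3 \<le> a" "a < reps n" "p < seg_len n"
  shows "(real a - 1) / real a \<le> bit_prob stored_star init_star witness (block_start n + a * seg_len n + p)"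
proof -
  let ?i = "block_start n + a * seg_len n + p"
  let ?x = "prefix_of witness ?i" and ?c = "segment n @ take p (segment n)" and ?b = "segment n ! p"
  have x: "?x = blocks n @ concat (replicate a (segment n)) @ take p (segment n)"
    by (rule prefix_of_witness_in_block[OF assms(2,3)])
  have b: "witness ?i = ?b"
    by (rule witness_in_block[OF assms(2,3)])
  have c: "sfx ?x (seg_len n + p) = ?c"
    using sfx_append_concat_replicate[of a p "segment n" "blocks n"] assms(1,3) x by (simp add: seg_len_def)
  have cnt: "a - 1 \<le> cnt ?x ?c ?b"
    unfolding x using assms(3) by (intro cnt_append_concat_replicate_ge) (simp add: seg_len_def)
  have "cnt ?x ?c (\<not> ?b) = 0"
    using occ_positions_context_in_block[OF assms(2,3)] by (force simp: cnt_def occ_eq_card_occ_positions)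
  moreover have "seg_len n + p \<le> length ?x"
    using mult_le_mono1[of 1 a "seg_len n"] assms(1) by (simp add: trans_le_add2)
  ultimately have "real (cnt ?x ?c ?b) / real (cnt ?x ?c ?b + 1) \<le> bit_prob stored_star init_star witness ?i"
    using cnt assms(1) enc_ppm_star_ge_deterministic[of "seg_len n + p" ?x ?b] c b
    unfolding bit_prob_def by simp
  moreover have "(real a - 1) / real a \<le> real (cnt ?x ?c ?b) / real (cnt ?x ?c ?b + 1)"
    using cnt assms(1) by (simp add: divide_le_eq le_divide_eq field_simps of_nat_diff)
  ultimately show ?thesis
    by linarith
qed

section \<open>The code length of PPM*\<close>

definition star_cost :: "nat \<Rightarrow> real" where
  "star_cost i = - log 2 (bit_prob stored_star init_star witness i)"

lemma star_cost_nonneg: "0 \<le> star_cost i"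
  using bit_prob_pos[of stored_star init_star witness i] bit_prob_le_1[of stored_star init_star witness i]
  by (simp add: star_cost_def)

lemma star_cost_le_log: "star_cost i \<le> 2 * log 2 (real i + 2)"
proof -
  have "1 / (real i + 2) ^ 2 \<le> bit_prob stored_star init_star witness i"
    using enc_ppm_star_ge[of "prefix_of witness i"] by (simp add: bit_prob_def)
  then have "log 2 (1 / (real i + 2) ^ 2) \<le> log 2 (bit_prob stored_star init_star witness i)"
    using bit_prob_pos by (subst log_le_cancel_iff) auto
  then show ?thesis
    by (simp add: star_cost_def log_divide log_nat_power)
qed

lemma star_cost_in_block:
  assumes "3 \<le> a" "a < reps n" "p < seg_len n"
  shows "star_cost (block_start n + a * seg_len n + p) \<le> log 2 (real a) - log 2 (real a - 1)"
proof -
  have "log 2 ((real a - 1) / real a)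
      \<le> log 2 (bit_prob stored_star init_star witness (block_start n + a * seg_len n + p))"
    using bit_prob_ppm_star_in_block[OF assms] bit_prob_pos assms(1) by (subst log_le_cancel_iff) auto
  then show ?thesis
    using assms(1) by (simp add: star_cost_def log_divide)
qed

lemma sum_log_ratio_eq:
  "(\<Sum>a<r. if 3 \<le> a then log 2 (real a) - log 2 (real a - 1) else 0)
     = (if 3 \<le> r then log 2 (real r - 1) - 1 else 0)"
proof (induction r)
  case (Suc r)
  then show ?case
    by (cases "r = 2") simp_all
qed simp

lemma sum_log_ratio_le:
  assumes "1 \<le> r"
  shows "(\<Sum>a<r. if 3 \<le> a then log 2 (real a) - log 2 (real a - 1) else 0) \<le> log 2 (real r)"
proof (cases "3 \<le> r")
  case True
  then have "log 2 (real r - 1) \<le> log 2 (real r)"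
    by (subst log_le_cancel_iff) auto
  then show ?thesis
    using True by (simp add: sum_log_ratio_eq del: log_le_cancel_iff)
qed (use assms in \<open>simp add: sum_log_ratio_eq\<close>)

lemma log_le_if_less_block_start:
  assumes "i < block_start (Suc n)"
  shows "log 2 (real i + 2) \<le> 8 * real n + 10"
proof -
  have "i + 2 \<le> (2::nat) ^ (8 * n + 10)"
    using assms block_start_le[of "Suc n"] by (simp add: power_add power_mult)
  then have "real i + 2 \<le> 2 ^ (8 * n + 10)"
    by (metis of_nat_add of_nat_le_iff of_nat_numeral of_nat_power)
  then have "log 2 (real i + 2) \<le> log 2 (2 ^ (8 * n + 10))"
    by (subst log_le_cancel_iff) auto
  then show ?thesis
    by (simp add: log_nat_power)
qed

lemma log_reps: "log 2 (real (reps n)) = 6 * (real n + 1)"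
proof -
  have "reps n = 2 ^ (6 * (n + 1))"
    using power_mult[of "2::nat" 6 "n + 1"] by (simp add: reps_def)
  then have "real (reps n) = 2 ^ (6 * (n + 1))"
    by simp
  then show ?thesis
    by (simp add: log_nat_power)
qed

lemma sum_star_cost_segment:
  assumes "a < reps n"
  shows "(\<Sum>p<seg_len n. star_cost (block_start n + a * seg_len n + p))
           \<le> real (seg_len n) * (if 3 \<le> a then log 2 (real a) - log 2 (real a - 1) else 16 * real n + 20)"
proof -
  have "star_cost (block_start n + a * seg_len n + p)
      \<le> (if 3 \<le> a then log 2 (real a) - log 2 (real a - 1) else 16 * real n + 20)"
    if p: "p < seg_len n" for p
  proof (cases "3 \<le> a")
    case True
    then show ?thesis
      using star_cost_in_block[OF True assms p] by simp
  next
    case False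
    have "star_cost (block_start n + a * seg_len n + p)
        \<le> 2 * log 2 (real (block_start n + a * seg_len n + p) + 2)"
      by (rule star_cost_le_log)
    also have "\<dots> \<le> 2 * (8 * real n + 10)"
      using log_le_if_less_block_start[OF in_block_le[OF assms p]] by simp
    finally show ?thesis
      using False by simp
  qed
  then show ?thesis
    using sum_bounded_above[of "{..<seg_len n}" "\<lambda>p. star_cost (block_start n + a * seg_len n + p)"
        "if 3 \<le> a then log 2 (real a) - log 2 (real a - 1) else 16 * real n + 20"]
    by simp
qed

lemma sum_star_cost_block:
  "(\<Sum>y<reps n * seg_len n. star_cost (block_start n + y)) \<le> real (seg_len n) * (54 * real n + 66)"
proof -
  let ?G = "16 * real n + 20"
  let ?h = "\<lambda>a. if 3 \<le> a then log 2 (real a) - log 2 (real a - 1) else ?G"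
  have "(\<Sum>y<reps n * seg_len n. star_cost (block_start n + y))
      = (\<Sum>a<reps n. \<Sum>p<seg_len n. star_cost (block_start n + a * seg_len n + p))"
    by (simp add: sum.nat_group[symmetric] sum.shift_bounds_nat_ivl[of _ 0, simplified] atLeast0LessThan
        ac_simps)
  also have "\<dots> \<le> (\<Sum>a<reps n. real (seg_len n) * ?h a)"
    by (intro sum_mono sum_star_cost_segment) simp
  also have "\<dots> = real (seg_len n) * ((\<Sum>a<reps n. if 3 \<le> a then log 2 (real a) - log 2 (real a - 1) else 0)
      + (\<Sum>a<reps n. if a < 3 then ?G else 0))"
    by (simp add: sum_distrib_left[symmetric] sum.distrib[symmetric]) (intro disjI2 sum.cong; simp)
  also have "\<dots> \<le> real (seg_len n) * (log 2 (real (reps n)) + 3 * ?G)"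
  proof (intro mult_left_mono add_mono)
    show "(\<Sum>a<reps n. if 3 \<le> a then log 2 (real a) - log 2 (real a - 1) else 0) \<le> log 2 (real (reps n))"
      by (rule sum_log_ratio_le) (simp add: reps_def)
    have "(\<Sum>a<reps n. if a < 3 then ?G else 0) = (\<Sum>a\<in>{..<reps n} \<inter> {..<3}. ?G)"
      by (simp add: sum.If_cases Int_def)
    also have "\<dots> \<le> (\<Sum>a<(3::nat). ?G)"
      by (rule sum_mono2) auto
    finally show "(\<Sum>a<reps n. if a < 3 then ?G else 0) \<le> 3 * ?G"
      by simp
  qed simp
  also have "\<dots> = real (seg_len n) * (54 * real n + 66)"
    by (simp add: log_reps algebra_simps)
  finally show ?thesis .
qed

lemma sum_star_cost_blocks:
  "(\<Sum>i<block_start n. star_cost i) \<le> (\<Sum>j<n. real (seg_len j) * (54 * real j + 66))"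
proof (induction n)
  case (Suc n)
  have "(\<Sum>i<block_start (Suc n). star_cost i)
      = (\<Sum>i<block_start n. star_cost i) + (\<Sum>y<reps n * seg_len n. star_cost (block_start n + y))"
    by (simp add: block_start_Suc sum_lessThan_add)
  then show ?case
    using Suc.IH sum_star_cost_block[of n] by simp
qed simp

lemma sum_seg_len_le: "(\<Sum>j<Suc n. real (seg_len j) * (54 * real j + 66)) \<le> 264 * 16 ^ n"
proof -
  have "real (seg_len j) * (54 * real j + 66) \<le> 4 ^ (n + 1) * (54 * real n + 66)" if "j < Suc n" for j
  proof (rule mult_mono)
    have "(4::nat) ^ (j + 1) \<le> 4 ^ (n + 1)"
      using that by (intro power_increasing) simp_all
    then have "seg_len j \<le> 4 ^ (n + 1)"
      using seg_len_le[of j] by (rule order.trans[rotated])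
    then show "real (seg_len j) \<le> 4 ^ (n + 1)"
      by (metis of_nat_le_iff of_nat_numeral of_nat_power)
  qed (use that in simp_all)
  then have "(\<Sum>j<Suc n. real (seg_len j) * (54 * real j + 66))
      \<le> real (card {..<Suc n}) * (4 ^ (n + 1) * (54 * real n + 66))"
    by (intro sum_bounded_above) simp
  also have "\<dots> = real (n + 1) * 4 ^ (n + 1) * (54 * real n + 66)"
    by simp
  also have "\<dots> \<le> 4 ^ (n + 1) * (66 * real ((n + 1) ^ 2))"
    by (simp add: power2_eq_square algebra_simps)
  also have "\<dots> \<le> 4 ^ (n + 1) * (66 * 4 ^ n)"
  proof -
    have "(n + 1) ^ 2 \<le> ((2::nat) ^ n) ^ 2"
      using less_exp[of n] by (intro power_mono) (simp_all add: Suc_le_eq)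
    also have "\<dots> = 4 ^ n"
      by (simp add: power2_eq_square power_mult_distrib[symmetric])
    finally have "real ((n + 1) ^ 2) \<le> 4 ^ n"
      by (metis of_nat_le_iff of_nat_numeral of_nat_power)
    then show ?thesis
      by simp
  qed
  also have "\<dots> = 264 * 16 ^ n"
    by (simp add: power_mult_distrib[symmetric])
  finally show ?thesis .
qed

lemma block_start_ge_pow:
  assumes "0 < n"
  shows "64 ^ n \<le> block_start n"
proof (cases n)
  case (Suc k)
  have "64 ^ n = reps k"
    by (simp add: reps_def Suc)
  also have "\<dots> \<le> reps k * seg_len k"
    using seg_len_pos[of k] by simp
  also have "\<dots> \<le> block_start n"
    by (simp add: Suc block_start_Suc)
  finally show ?thesis .
qed (use assms in simp)

lemma ppm_star_len_eq: "ppm_star_len = code_len stored_star init_star"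
  by (simp add: ppm_star_len_def fun_eq_iff)

lemma ppm_star_len_ratio_le:
  assumes "0 < n" "block_start n \<le> m" "m < block_start (Suc n)"
  shows "ppm_star_len (prefix_of witness m) / real m \<le> 265 / 4 ^ n"
proof -
  have "ppm_star_len (prefix_of witness m) \<le> (\<Sum>i<m. star_cost i) + 1"
    using code_len_bounds(2)[of stored_star init_star "prefix_of witness m"]
    unfolding ppm_star_len_eq minus_log_prob_model_prefix_of star_cost_def by simp
  also have "(\<Sum>i<m. star_cost i) \<le> (\<Sum>i<block_start (Suc n). star_cost i)"
    using assms(3) star_cost_nonneg by (intro sum_mono2) auto
  also have "\<dots> \<le> 264 * 16 ^ n"
    using sum_star_cost_blocks[of "Suc n"] sum_seg_len_le[of n] by linarith
  finally have "ppm_star_len (prefix_of witness m) \<le> 265 * 16 ^ n"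
    using one_le_power[of "16::real" n] by linarith
  moreover have "(64::real) ^ n \<le> real m"
    using block_start_ge_pow[OF assms(1)] assms(2)
    by (metis of_nat_le_iff of_nat_numeral of_nat_power order.trans)
  ultimately have "ppm_star_len (prefix_of witness m) / real m \<le> 265 * 16 ^ n / 64 ^ n"
    by (intro frac_le) simp_all
  also have "\<dots> = 265 / 4 ^ n"
    by (simp add: power_mult_distrib[symmetric] field_simps)
  finally show ?thesis .
qed

lemma ppm_star_len_ratio_tendsto_0: "(\<lambda>m. ppm_star_len (prefix_of witness m) / real m) \<longlonglongrightarrow> 0"
proof (rule LIMSEQ_I)
  fix r :: real
  assume "0 < r"
  obtain N :: nat where N: "265 / r < real N"
    using reals_Archimedean2 by blast
  have "norm (ppm_star_len (prefix_of witness m) / real m - 0) < r" if m: "block_start (Suc N) \<le> m" for m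
  proof -
    obtain n where n: "Suc N \<le> n" "block_start n \<le> m" "m < block_start (Suc n)"
      using in_block[OF m] by blast
    have "n < (4::nat) ^ n"
      using less_exp[of n] power_mono[of "2::nat" 4 n] by linarith
    then have "real n < 4 ^ n"
      by (metis of_nat_less_iff of_nat_numeral of_nat_power)
    then have "265 / r < 4 ^ n"
      using N n(1) by linarith
    then have "265 / 4 ^ n < r"
      using \<open>0 < r\<close> by (simp add: divide_less_eq mult.commute)
    moreover have "0 \<le> ppm_star_len (prefix_of witness m) / real m"
      unfolding ppm_star_len_eq using code_len_prefix_of_nonneg by simp
    ultimately show ?thesis
      using ppm_star_len_ratio_le[of n m] n by simp
  qed
  then show "\<exists>m0. \<forall>m\<ge>m0. norm (ppm_star_len (prefix_of witness m) / real m - 0) < r"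
    by blast
qed

theorem theorem3:
  shows "\<exists>S :: nat \<Rightarrow> bool. upper_ratio ppm_star_len S = 0 \<and>
           (\<forall>k. lower_ratio (ppm_k_len k) S \<ge> 1 / 2)"
  using upper_ratio_eq_0I[OF ppm_star_len_ratio_tendsto_0] lower_ratio_ppm_k_witness by blast

end
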